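(* A ring $R$ is strongly nil-clean if and only if $R$ is a CSNC ring and $R$ is semi-potent.
   Context: All rings are associative with identity $1$. For a ring $R$, $\mathrm{Id}(R)$, $U(R)$, $\mathrm{Nil}(R)$ denote the sets of idempotents, units and nilpotent elements, and $J(R)$ the Jacobson radical. An element $a\in R$ is clean if $a=e+u$ for some $e\in\mathrm{Id}(R)$, $u\in U(R)$. An element $a$ is strongly nil-clean if $a=e+q$ with $e\in \mathrm{Id}(R)$, $q\in\mathrm{Nil}(R)$ and $eq=qe$; the ring $R$ is strongly nil-clean if every element is strongly nil-clean. A ring $R$ is called CSNC if every clean element of $R$ is strongly nil-clean. A ring $R$ is semi-potent if every one-sided ideal of $R$ not contained in $J(R)$ contains a nonzero idempotent. *)

theory Defs
  imports Main
begin

text \<open>Rings: associative with identity, not necessarily commutative; the zero ring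
is allowed (type class ring + monoid_mult, no 0 \<noteq> 1 requirement).\<close>

definition idempotents :: "('a::{ring,monoid_mult}) set" where
  "idempotents = {e. e * e = e}"

definition units_of_ring :: "('a::{ring,monoid_mult}) set" where
  "units_of_ring = {u. \<exists>v. u * v = 1 \<and> v * u = 1}"

definition nilpotents :: "('a::{ring,monoid_mult}) set" where
  "nilpotents = {q. \<exists>n::nat. q ^ n = 0}"

definition left_ideal :: "('a::{ring,monoid_mult}) set \<Rightarrow> bool" where
  "left_ideal I \<longleftrightarrow> 0 \<in> I \<and> (\<forall>x\<in>I. \<forall>y\<in>I. x + y \<in> I) \<and> (\<forall>x\<in>I. - x \<in> I)
     \<and> (\<forall>r. \<forall>x\<in>I. r * x \<in> I)"

definition right_ideal :: "('a::{ring,monoid_mult}) set \<Rightarrow> bool" where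
  "right_ideal I \<longleftrightarrow> 0 \<in> I \<and> (\<forall>x\<in>I. \<forall>y\<in>I. x + y \<in> I) \<and> (\<forall>x\<in>I. - x \<in> I)
     \<and> (\<forall>r. \<forall>x\<in>I. x * r \<in> I)"

definition maximal_left_ideal :: "('a::{ring,monoid_mult}) set \<Rightarrow> bool" where
  "maximal_left_ideal M \<longleftrightarrow> left_ideal M \<and> M \<noteq> UNIV \<and>
     (\<forall>I. left_ideal I \<and> M \<subseteq> I \<longrightarrow> I = M \<or> I = UNIV)"

definition jacobson :: "('a::{ring,monoid_mult}) set" where
  "jacobson = \<Inter> {M. maximal_left_ideal M}"

definition clean :: "'a::{ring,monoid_mult} \<Rightarrow> bool" where
  "clean a \<longleftrightarrow> (\<exists>e u. e \<in> idempotents \<and> u \<in> units_of_ring \<and> a = e + u)"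

definition strongly_nil_clean_elem :: "'a::{ring,monoid_mult} \<Rightarrow> bool" where
  "strongly_nil_clean_elem a \<longleftrightarrow>
     (\<exists>e q. e \<in> idempotents \<and> q \<in> nilpotents \<and> e * q = q * e \<and> a = e + q)"

definition strongly_nil_clean_ring :: "'a::{ring,monoid_mult} itself \<Rightarrow> bool" where
  "strongly_nil_clean_ring _ \<longleftrightarrow> (\<forall>a::'a. strongly_nil_clean_elem a)"

definition CSNC_ring :: "'a::{ring,monoid_mult} itself \<Rightarrow> bool" where
  "CSNC_ring _ \<longleftrightarrow> (\<forall>a::'a. clean a \<longrightarrow> strongly_nil_clean_elem a)"

definition semi_potent :: "'a::{ring,monoid_mult} itself \<Rightarrow> bool" where
  "semi_potent _ \<longleftrightarrow> (\<forall>I::'a set. (left_ideal I \<or> right_ideal I) \<and> \<not> I \<subseteq> jacobson \<longrightarrow>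
       (\<exists>e\<in>I. e \<in> idempotents \<and> e \<noteq> 0))"

end

theory Submission
  imports Defs
begin

text \<open>
  In a strongly nil-clean ring, an element y = f + q of a one-sided ideal I satisfies
  f = f y (1 + q)^-1, so f \<in> I; if I contains no nonzero idempotent, all its elements are
  nilpotent and I \<subseteq> J(R).

  Conversely, in a CSNC ring every unit is clean, hence unipotent. Such rings admit no
  nontrivial 2 \<times> 2 matrix units, are Dedekind-finite, and have a nil Jacobson radical.
  Semi-potency provides a nonzero idempotent e \<in> c R for every c \<notin> J(R); combined with
  the absence of matrix units this shows first that x^2 \<in> J(R) implies x \<in> J(R), and then
  that a - a^2 \<in> J(R) for every a, since otherwise both e a e and e (1 - a) e would be
  congruent to e modulo J(R) in the corner e R e. So a - a^2 is nilpotent, and lifting the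
  idempotent a + J(R) by Newton's iteration inside the bicommutant of a yields a strongly
  nil-clean decomposition of a.
\<close>

lemma eq_zero_if_one_eq_zero:
  fixes x :: "'a::{ring,monoid_mult}"
  shows "1 = (0::'a) \<Longrightarrow> x = 0"
  by (metis mult_1_right mult_zero_right)

lemma power_mult_distrib_commuting:
  fixes x y :: "'a::monoid_mult"
  assumes "x * y = y * x"
  shows "(x * y) ^ n = x ^ n * y ^ n"
proof (induction n)
  case (Suc n)
  have "(x * y) ^ Suc n = x * (y * x ^ n) * y ^ n"
    using Suc by (simp add: mult.assoc)
  also have "\<dots> = x * (x ^ n * y) * y ^ n"
    using power_commuting_commutes[OF assms] by simp
  also have "\<dots> = x ^ Suc n * y ^ Suc n"
    by (simp add: mult.assoc)
  finally show ?case .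
qed simp

lemma inverse_commuting:
  fixes x u v :: "'a::monoid_mult"
  assumes "u * v = 1" "v * u = 1" "x * u = u * x"
  shows "x * v = v * x"
proof -
  have "x * v = (v * u) * (x * v)"
    using assms(2) by simp
  also have "\<dots> = v * (u * x) * v"
    by (simp add: mult.assoc)
  also have "\<dots> = v * x * (u * v)"
    by (metis assms(3) mult.assoc)
  finally show ?thesis
    using assms(1) by simp
qed

lemma nilpotent_uminus:
  fixes q :: "'a::{ring,monoid_mult}"
  assumes "q ^ n = 0"
  shows "(- q) ^ n = 0"
proof -
  have "(- q) ^ n = q ^ n \<or> (- q) ^ n = - (q ^ n)"
    by (induction n) auto
  then show ?thesis
    using assms by auto
qed

lemma one_minus_times_geometric_sum:
  fixes z :: "'a::{ring,monoid_mult}"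
  shows "(1 - z) * (\<Sum>k<n. z ^ k) = 1 - z ^ n"
proof (induction n)
  case (Suc n)
  have "(1 - z) * (\<Sum>k<Suc n. z ^ k) = (1 - z) * (\<Sum>k<n. z ^ k) + (1 - z) * z ^ n"
    by (simp add: distrib_left)
  also have "\<dots> = 1 - z ^ n + (z ^ n - z ^ Suc n)"
    using Suc by (simp add: algebra_simps)
  finally show ?case
    by simp
qed simp

lemma geometric_sum_times_one_minus:
  fixes z :: "'a::{ring,monoid_mult}"
  shows "(\<Sum>k<n. z ^ k) * (1 - z) = 1 - z ^ n"
proof (induction n)
  case (Suc n)
  have "(\<Sum>k<Suc n. z ^ k) * (1 - z) = (\<Sum>k<n. z ^ k) * (1 - z) + z ^ n * (1 - z)"
    by (simp add: distrib_right)
  also have "\<dots> = 1 - z ^ n + (z ^ n - z ^ Suc n)"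
    using Suc by (simp add: algebra_simps power_Suc2 power_commutes)
  finally show ?case
    by simp
qed simp

lemma one_minus_nilpotent_unit:
  fixes z :: "'a::{ring,monoid_mult}"
  assumes "z ^ n = 0"
  shows "1 - z \<in> units_of_ring"
  using one_minus_times_geometric_sum[of z n] geometric_sum_times_one_minus[of z n] assms
  unfolding units_of_ring_def by auto

lemma one_minus_swap_unit:
  fixes x r :: "'a::{ring,monoid_mult}"
  assumes "1 - x * r \<in> units_of_ring"
  shows "1 - r * x \<in> units_of_ring"
proof -
  obtain u where u: "(1 - x * r) * u = 1" "u * (1 - x * r) = 1"
    using assms by (auto simp: units_of_ring_def)
  have "(1 - r * x) * (1 + r * u * x) = 1 - r * x + r * ((1 - x * r) * u) * x"
    by (simp add: algebra_simps)
  moreover have "(1 + r * u * x) * (1 - r * x) = 1 - r * x + r * (u * (1 - x * r)) * x"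
    by (simp add: algebra_simps)
  ultimately show ?thesis
    using u unfolding units_of_ring_def by auto
qed

section \<open>The Jacobson radical\<close>

lemma left_ideal_eq_UNIV_if_one:
  assumes "left_ideal I" "1 \<in> I"
  shows "I = UNIV"
  using assms by (metis UNIV_eq_I left_ideal_def mult_1_right)

lemma left_ideal_principal:
  "left_ideal (range (\<lambda>s. s * y))"
  unfolding left_ideal_def
proof (intro conjI ballI allI)
  show "0 \<in> range (\<lambda>s. s * y)"
    by (rule range_eqI[of _ _ 0]) simp
  fix a b r
  assume "a \<in> range (\<lambda>s. s * y)" "b \<in> range (\<lambda>s. s * y)"
  then obtain s t where "a = s * y" "b = t * y"
    by auto
  then have "a + b = (s + t) * y" "- a = (- s) * y" "r * a = (r * s) * y"
    by (simp_all add: algebra_simps)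
  then show "a + b \<in> range (\<lambda>s. s * y)" "- a \<in> range (\<lambda>s. s * y)"
    "r * a \<in> range (\<lambda>s. s * y)"
    unfolding image_iff by blast+
qed

lemma left_ideal_add_principal:
  assumes "left_ideal M"
  shows "left_ideal {m + r * x | m r. m \<in> M}"
  unfolding left_ideal_def
proof (intro conjI ballI allI)
  have M: "0 \<in> M" "\<And>a b. a \<in> M \<Longrightarrow> b \<in> M \<Longrightarrow> a + b \<in> M"
    "\<And>a. a \<in> M \<Longrightarrow> - a \<in> M" "\<And>s a. a \<in> M \<Longrightarrow> s * a \<in> M"
    using assms by (auto simp: left_ideal_def)
  show "0 \<in> {m + r * x | m r. m \<in> M}"
    using M(1) by (auto intro!: exI[of _ 0])
  fix a b s
  assume "a \<in> {m + r * x | m r. m \<in> M}" "b \<in> {m + r * x | m r. m \<in> M}"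
  then obtain m1 r1 m2 r2 where "a = m1 + r1 * x" "b = m2 + r2 * x" "m1 \<in> M" "m2 \<in> M"
    by auto
  then have "a + b = (m1 + m2) + (r1 + r2) * x" "m1 + m2 \<in> M"
    and "- a = (- m1) + (- r1) * x" "- m1 \<in> M"
    and "s * a = (s * m1) + (s * r1) * x" "s * m1 \<in> M"
    using M by (simp_all add: algebra_simps)
  then show "a + b \<in> {m + r * x | m r. m \<in> M}" "- a \<in> {m + r * x | m r. m \<in> M}"
    "s * a \<in> {m + r * x | m r. m \<in> M}"
    by blast+
qed

lemma left_ideal_Union_chain:
  assumes "C \<noteq> {}" "\<And>I. I \<in> C \<Longrightarrow> left_ideal I" "\<forall>X\<in>C. \<forall>Y\<in>C. X \<subseteq> Y \<or> Y \<subseteq> X"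
  shows "left_ideal (\<Union>C)"
  unfolding left_ideal_def
proof (intro conjI ballI allI)
  show "0 \<in> \<Union>C"
    using assms(1,2) by (auto simp: left_ideal_def)
  fix a b
  assume "a \<in> \<Union>C" "b \<in> \<Union>C"
  then obtain X Y where XY: "X \<in> C" "Y \<in> C" "a \<in> X" "b \<in> Y"
    by auto
  with assms(3) have "a \<in> Y \<and> b \<in> Y \<and> Y \<in> C \<or> a \<in> X \<and> b \<in> X \<and> X \<in> C"
    by blast
  then show "a + b \<in> \<Union>C"
    using assms(2) unfolding left_ideal_def by blast
next
  fix a
  assume "a \<in> \<Union>C"
  then show "- a \<in> \<Union>C"
    using assms(2) unfolding left_ideal_def by blast
next
  fix s a
  assume "a \<in> \<Union>C"
  then show "s * a \<in> \<Union>C"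
    using assms(2) unfolding left_ideal_def by blast
qed

lemma left_ideal_extend_maximal:
  assumes "left_ideal I" "1 \<notin> I"
  obtains M where "maximal_left_ideal M" "I \<subseteq> M"
proof -
  define A where "A = {J. left_ideal J \<and> I \<subseteq> J \<and> 1 \<notin> J}"
  have "\<Union>C \<in> A" if "C \<noteq> {}" "subset.chain A C" for C
  proof -
    have "C \<subseteq> A" "\<forall>X\<in>C. \<forall>Y\<in>C. X \<subseteq> Y \<or> Y \<subseteq> X"
      using that(2) by (auto simp: subset_chain_def)
    then have "left_ideal (\<Union>C)"
      using left_ideal_Union_chain[OF that(1)] by (auto simp: A_def)
    then show ?thesis
      using that(1) \<open>C \<subseteq> A\<close> by (auto simp: A_def)
  qed
  moreover have "I \<in> A"
    using assms by (simp add: A_def)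
  ultimately obtain M where M: "M \<in> A" "\<forall>X\<in>A. M \<subseteq> X \<longrightarrow> X = M"
    using subset_Zorn_nonempty[of A] by blast
  have "maximal_left_ideal M"
    unfolding maximal_left_ideal_def
  proof (intro conjI allI impI)
    show "left_ideal M" "M \<noteq> UNIV"
      using M(1) by (auto simp: A_def)
    fix J
    assume J: "left_ideal J \<and> M \<subseteq> J"
    show "J = M \<or> J = UNIV"
    proof (cases "1 \<in> J")
      case True
      then show ?thesis
        using J left_ideal_eq_UNIV_if_one by blast
    next
      case False
      then show ?thesis
        using J M by (auto simp: A_def)
    qed
  qed
  then show thesis
    using that M(1) by (auto simp: A_def)
qed

lemma mem_jacobson_iff: "x \<in> jacobson \<longleftrightarrow> (\<forall>M. maximal_left_ideal M \<longrightarrow> x \<in> M)"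
  by (auto simp: jacobson_def)

lemma left_ideal_jacobson: "left_ideal (jacobson :: 'a::{ring,monoid_mult} set)"
proof -
  have M: "0 \<in> M" "\<And>x y. x \<in> M \<Longrightarrow> y \<in> M \<Longrightarrow> x + y \<in> M"
    "\<And>x. x \<in> M \<Longrightarrow> - x \<in> M" "\<And>r x. x \<in> M \<Longrightarrow> r * x \<in> M"
    if "maximal_left_ideal M" for M :: "'a set"
    using that by (simp_all add: maximal_left_ideal_def left_ideal_def)
  show ?thesis
    unfolding left_ideal_def mem_jacobson_iff by (intro conjI ballI allI impI) (simp_all add: M mem_jacobson_iff)
qed

lemma jacobson_if_units:
  fixes x :: "'a::{ring,monoid_mult}"
  assumes units: "\<And>r. 1 - r * x \<in> units_of_ring"
  shows "x \<in> jacobson"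
proof (rule ccontr)
  assume "x \<notin> jacobson"
  then obtain M where M: "maximal_left_ideal M" "x \<notin> M"
    by (auto simp: mem_jacobson_iff)
  have M_ideal: "left_ideal M" "M \<noteq> UNIV"
    using M(1) by (auto simp: maximal_left_ideal_def)
  define I where "I = {m + r * x | m r. m \<in> M}"
  have "left_ideal I"
    unfolding I_def using M_ideal(1) by (rule left_ideal_add_principal)
  moreover have "M \<subseteq> I"
    unfolding I_def by (force intro: exI[of _ 0])
  moreover have "x \<in> I"
    using M_ideal(1) unfolding I_def left_ideal_def by (force intro: exI[of _ 1])
  ultimately have "I = UNIV"
    using M by (auto simp: maximal_left_ideal_def)
  then obtain m r where "1 = m + r * x" "m \<in> M"
    unfolding I_def by blast
  then have "1 - r * x \<in> M"
    by (metis add_diff_cancel)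
  moreover obtain v where "v * (1 - r * x) = 1"
    using units[of r] by (auto simp: units_of_ring_def)
  ultimately have "1 \<in> M"
    using M_ideal(1) unfolding left_ideal_def by metis
  then show False
    using M_ideal left_ideal_eq_UNIV_if_one by blast
qed

lemma jacobson_left_invertible:
  fixes x :: "'a::{ring,monoid_mult}"
  assumes "x \<in> jacobson"
  shows "\<exists>w. w * (1 - r * x) = 1"
proof (rule ccontr)
  define L where "L = range (\<lambda>s. s * (1 - r * x))"
  assume "\<nexists>w. w * (1 - r * x) = 1"
  then have "1 \<notin> L"
    unfolding L_def by (metis rangeE)
  then obtain M where M: "maximal_left_ideal M" "L \<subseteq> M"
    using left_ideal_extend_maximal left_ideal_principal unfolding L_def by metis
  have M_ideal: "left_ideal M" "M \<noteq> UNIV"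
    using M(1) by (auto simp: maximal_left_ideal_def)
  have "r * x \<in> M"
    using assms M(1) M_ideal(1) by (auto simp: mem_jacobson_iff left_ideal_def)
  moreover have "1 - r * x \<in> M"
    using M(2) unfolding L_def by (metis mult_1_left rangeI subsetD)
  ultimately have "1 \<in> M"
    using M_ideal(1) unfolding left_ideal_def by (metis diff_add_cancel)
  then show False
    using M_ideal left_ideal_eq_UNIV_if_one by blast
qed

lemma jacobson_unit:
  fixes x :: "'a::{ring,monoid_mult}"
  assumes x: "x \<in> jacobson"
  shows "1 - r * x \<in> units_of_ring"
proof -
  obtain w where w: "w * (1 - r * x) = 1"
    using jacobson_left_invertible[OF x] by blast
  then have "w = 1 - (- (w * r)) * x"
    by (simp add: algebra_simps)
  then obtain v where v: "v * w = 1"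
    using jacobson_left_invertible[OF x, of "- (w * r)"] by metis
  have "v = v * (w * (1 - r * x))"
    using w by simp
  also have "\<dots> = 1 - r * x"
    using v by (simp add: mult.assoc[symmetric])
  finally show ?thesis
    using v w by (auto simp: units_of_ring_def)
qed

lemma jacobson_iff_units:
  "(x::'a::{ring,monoid_mult}) \<in> jacobson \<longleftrightarrow> (\<forall>r. 1 - r * x \<in> units_of_ring)"
  using jacobson_if_units jacobson_unit by blast

lemma jacobson_zero: "(0::'a::{ring,monoid_mult}) \<in> jacobson"
  using left_ideal_jacobson by (auto simp: left_ideal_def)

lemma jacobson_add:
  "(x::'a::{ring,monoid_mult}) \<in> jacobson \<Longrightarrow> y \<in> jacobson \<Longrightarrow> x + y \<in> jacobson"
  using left_ideal_jacobson by (auto simp: left_ideal_def)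

lemma jacobson_uminus_iff: "- (x::'a::{ring,monoid_mult}) \<in> jacobson \<longleftrightarrow> x \<in> jacobson"
  using left_ideal_jacobson by (metis left_ideal_def minus_minus)

lemma jacobson_mult_left: "(x::'a::{ring,monoid_mult}) \<in> jacobson \<Longrightarrow> s * x \<in> jacobson"
  using left_ideal_jacobson by (auto simp: left_ideal_def)

lemma jacobson_mult_right: "(x::'a::{ring,monoid_mult}) \<in> jacobson \<Longrightarrow> x * s \<in> jacobson"
  unfolding jacobson_iff_units using one_minus_swap_unit[of s "_ * x"] by (metis mult.assoc)

lemma idempotent_jacobson_eq_0:
  fixes e :: "'a::{ring,monoid_mult}"
  assumes "e * e = e" "e \<in> jacobson"
  shows "e = 0"
proof -
  obtain v where v: "(1 - 1 * e) * v = 1"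
    using jacobson_unit[OF assms(2), of 1] by (auto simp: units_of_ring_def)
  have "e = e * ((1 - e) * v)"
    using v by simp
  also have "\<dots> = (e - e * e) * v"
    by (simp add: algebra_simps)
  finally show ?thesis
    using assms(1) by simp
qed

lemma one_sided_ideal_subset_jacobson:
  fixes I :: "'a::{ring,monoid_mult} set"
  assumes "left_ideal I \<or> right_ideal I" "\<And>y. y \<in> I \<Longrightarrow> 1 - y \<in> units_of_ring"
  shows "I \<subseteq> jacobson"
proof
  fix x
  assume "x \<in> I"
  then have "1 - r * x \<in> units_of_ring" for r
    using assms one_minus_swap_unit[of x r] by (auto simp: left_ideal_def right_ideal_def)
  then show "x \<in> jacobson"
    by (rule jacobson_if_units)
qed

section \<open>Semi-potency of strongly nil-clean rings\<close>

lemma strongly_nil_clean_idempotent_in_ideal: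
  fixes y :: "'a::{ring,monoid_mult}"
  assumes "strongly_nil_clean_elem y" "left_ideal I \<or> right_ideal I" "y \<in> I"
  obtains f q n where "f * f = f" "q ^ n = 0" "y = f + q" "f \<in> I"
proof -
  obtain f q n where fq: "f * f = f" "q ^ n = 0" "f * q = q * f" "y = f + q"
    using assms(1) by (auto simp: strongly_nil_clean_elem_def idempotents_def nilpotents_def)
  obtain v where v: "(1 - - q) * v = 1" "v * (1 - - q) = 1"
    using one_minus_nilpotent_unit[OF nilpotent_uminus[OF fq(2)]] by (auto simp: units_of_ring_def)
  have "y * (1 - - q) = (1 - - q) * y"
    using fq by (simp add: algebra_simps)
  then have yv: "y * v = v * y"
    using inverse_commuting[OF v] by blast
  have "f * y = f * (1 - - q)"
    using fq by (simp add: algebra_simps)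
  then have f: "f = f * y * v"
    using v(1) by (simp add: mult.assoc)
  have "f * y = y * f"
    using fq by (simp add: algebra_simps)
  then have "f = (f * v) * y" "f = y * (f * v)"
    using f yv by (metis mult.assoc)+
  with assms(2,3) have "f \<in> I"
    unfolding left_ideal_def right_ideal_def by metis
  then show thesis
    using that fq by blast
qed

lemma strongly_nil_clean_imp_semi_potent:
  assumes "strongly_nil_clean_ring TYPE('a::{ring,monoid_mult})"
  shows "semi_potent TYPE('a)"
  unfolding semi_potent_def
proof (intro allI impI)
  fix I :: "'a set"
  assume "(left_ideal I \<or> right_ideal I) \<and> \<not> I \<subseteq> jacobson"
  then have I: "left_ideal I \<or> right_ideal I" and not_radical: "\<not> I \<subseteq> jacobson"
    by blast+
  show "\<exists>e\<in>I. e \<in> idempotents \<and> e \<noteq> 0"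
  proof (rule ccontr)
    assume no_idempotent: "\<not> (\<exists>e\<in>I. e \<in> idempotents \<and> e \<noteq> 0)"
    have "1 - y \<in> units_of_ring" if "y \<in> I" for y
    proof -
      have "strongly_nil_clean_elem y"
        using assms unfolding strongly_nil_clean_ring_def ..
      then obtain f q n where "f * f = f" "q ^ n = 0" "y = f + q" "f \<in> I"
        using I \<open>y \<in> I\<close> by (rule strongly_nil_clean_idempotent_in_ideal)
      with no_idempotent have "y ^ n = 0"
        by (auto simp: idempotents_def)
      then show ?thesis
        by (rule one_minus_nilpotent_unit)
    qed
    with I have "I \<subseteq> jacobson"
      by (rule one_sided_ideal_subset_jacobson)
    with not_radical show False ..
  qed
qed

section \<open>Rings whose units are unipotent\<close>

definition UU_ring :: "'a::{ring,monoid_mult} itself \<Rightarrow> bool" where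
  "UU_ring _ \<longleftrightarrow> (\<forall>u::'a. u \<in> units_of_ring \<longrightarrow> u - 1 \<in> nilpotents)"

lemma CSNC_imp_UU_ring:
  assumes "CSNC_ring TYPE('a::{ring,monoid_mult})"
  shows "UU_ring TYPE('a)"
  unfolding UU_ring_def
proof (intro allI impI)
  fix u :: 'a
  assume u: "u \<in> units_of_ring"
  then have "clean u"
    unfolding clean_def idempotents_def by (intro exI[of _ 0] exI[of _ u]) simp
  then obtain e q n where eq: "e * e = e" "q ^ n = 0" "e * q = q * e" "u = e + q"
    using assms
    by (auto simp: CSNC_ring_def strongly_nil_clean_elem_def idempotents_def nilpotents_def)
  obtain v where uv: "u * v = 1" "v * u = 1"
    using u by (auto simp: units_of_ring_def)
  have "q * u = u * q"
    using eq by (simp add: algebra_simps)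
  then have "(v * q) ^ n = 0"
    using inverse_commuting[OF uv] eq(2) power_mult_distrib_commuting[of v q n] by simp
  then obtain w where w: "(1 - v * q) * w = 1"
    using one_minus_nilpotent_unit by (auto simp: units_of_ring_def)
  text \<open>The idempotent e = u (1 - v q) is a unit, hence equal to 1.\<close>
  have "u * (1 - v * q) = u - (u * v) * q"
    by (simp add: algebra_simps)
  then have e: "e = u * (1 - v * q)"
    using uv eq(4) by simp
  then have "e * (w * v) = u * ((1 - v * q) * w) * v"
    by (simp add: mult.assoc)
  then have ewv: "e * (w * v) = 1"
    using w uv by simp
  have "e = e * (e * (w * v))"
    using ewv by simp
  also have "\<dots> = (e * e) * (w * v)"
    by (simp add: mult.assoc)
  also have "\<dots> = 1"
    using eq(1) ewv by simp
  finally show "u - 1 \<in> nilpotents"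
    using eq(2,4) by (auto simp: nilpotents_def)
qed

context
  assumes UU: "UU_ring TYPE('a::{ring,monoid_mult})"
begin

lemma unit_unipotent:
  fixes u :: 'a
  assumes "u \<in> units_of_ring"
  obtains n where "(u - 1) ^ n = 0"
  using UU assms by (auto simp: UU_ring_def nilpotents_def)

lemma jacobson_nil:
  fixes x :: 'a
  assumes "x \<in> jacobson"
  obtains n where "x ^ n = 0"
proof -
  have "1 - (- 1) * x \<in> units_of_ring"
    using jacobson_unit[OF assms] .
  then obtain n where "(1 - (- 1) * x - 1) ^ n = 0"
    by (rule unit_unipotent)
  then show thesis
    using that by simp
qed

text \<open>
  With f = b a, the elements e, a, b, f are matrix units e11, e12, e21, e22 of the corner ring
  g R g, g = e + f. For t = a + b - e and s = a + b + f we have t s = s t = g, and 1 + t is a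
  unit with inverse 1 - g + t; unipotency makes t, hence the idempotent g, nilpotent.
\<close>
lemma matrix_units_trivial:
  fixes e a b :: 'a
  assumes ee: "e * e = e" and ea: "e * a = a" and ae: "a * e = 0"
    and be: "b * e = b" and eb: "e * b = 0" and ab: "a * b = e"
  shows "e = 0"
proof -
  define f where "f = b * a"
  have aa: "a * a = 0" by (metis ae ea mult.assoc mult_zero_left)
  have bb: "b * b = 0" by (metis be eb mult.assoc mult_zero_right)
  have ef: "e * f = 0" unfolding f_def by (metis eb mult.assoc mult_zero_left)
  have af: "a * f = a" unfolding f_def by (metis ab ea mult.assoc)
  have bf: "b * f = 0" unfolding f_def by (metis bb mult.assoc mult_zero_left)
  have fe: "f * e = 0" unfolding f_def by (metis ae mult.assoc mult_zero_right)
  have fa: "f * a = 0" unfolding f_def by (metis aa mult.assoc mult_zero_right)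
  have fb: "f * b = b" unfolding f_def by (metis ab be mult.assoc)
  have ff: "f * f = f" unfolding f_def by (metis ab be mult.assoc)
  note units_table = ee ea ae be eb ab aa bb ef af bf fe fa fb ff f_def[symmetric]
  define t where "t = a + b - e"
  define s where "s = a + b + f"
  define g where "g = e + f"
  have ts: "t * s = g" and st: "s * t = g"
    unfolding t_def s_def g_def by (simp_all add: algebra_simps units_table)
  have "g * t = t" "t * g = t" "g * s = s" "s * g = s" and gg: "g * g = g"
    unfolding t_def s_def g_def by (simp_all add: algebra_simps units_table)
  then have "(1 - g + s) * (1 - g + t) = 1" "(1 - g + t) * (1 - g + s) = 1"
    using ts st by (simp_all add: algebra_simps)
  moreover have "1 - g + s = 1 + t"
    unfolding t_def s_def g_def by (simp add: algebra_simps)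
  ultimately have "(1 + t) * (1 - g + t) = 1" "(1 - g + t) * (1 + t) = 1"
    by simp_all
  then have "1 + t \<in> units_of_ring"
    unfolding units_of_ring_def by blast
  then obtain n where "(1 + t - 1) ^ n = 0"
    by (rule unit_unipotent)
  then have "g ^ n = 0"
    using power_mult_distrib_commuting[of t s n] ts st by simp
  moreover have "g ^ Suc m = g" for m
    by (induction m) (simp_all add: gg mult.assoc[symmetric])
  ultimately have "g = 0"
    using eq_zero_if_one_eq_zero by (cases n) auto
  moreover have "e * g = e"
    unfolding g_def by (simp add: distrib_left ee ef)
  ultimately show "e = 0"
    by simp
qed

lemma dedekind_finite:
  fixes z w :: 'a
  assumes zw: "z * w = 1"
  shows "w * z = 1"
proof -
  define g where "g = 1 - w * z"
  have zw2: "\<And>x. z * (w * x) = x"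
    by (simp add: mult.assoc[symmetric] zw)
  have gg: "g * g = g" and zg: "z * g = 0" and gw: "g * w = 0"
    unfolding g_def by (simp_all add: algebra_simps zw zw2)
  have "g = 0"
  proof (rule matrix_units_trivial[of g "g * z" "w * g"])
    show "g * g = g" "g * (g * z) = g * z"
      using gg by (simp_all add: mult.assoc[symmetric])
    show "w * g * g = w * g"
      using gg by (simp add: mult.assoc)
    show "g * z * g = 0"
      using zg by (simp add: mult.assoc)
    show "g * (w * g) = 0"
      using gw by (simp add: mult.assoc[symmetric])
    show "g * z * (w * g) = g"
      using gg zw2 by (simp add: mult.assoc)
  qed
  then show ?thesis
    unfolding g_def by simp
qed

end

context
  assumes UU: "UU_ring TYPE('a::{ring,monoid_mult})"
    and sp: "semi_potent TYPE('a)"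
begin

lemma idempotent_in_principal_right_ideal:
  fixes c :: 'a
  assumes "c \<notin> jacobson"
  obtains r where "(c * r) * (c * r) = c * r" "c * r \<noteq> 0"
proof -
  define I where "I = range (\<lambda>r. c * r)"
  have "right_ideal I"
    unfolding right_ideal_def I_def
    by (auto simp: distrib_left[symmetric] mult.assoc intro: range_eqI[of _ _ 0] range_eqI[of _ _ "- _"])
  moreover have "c \<in> I"
    unfolding I_def by (metis mult_1_right rangeI)
  ultimately obtain e where "e \<in> I" "e * e = e" "e \<noteq> 0"
    using sp assms unfolding semi_potent_def idempotents_def by blast
  then show thesis
    using that unfolding I_def by auto
qed

text \<open>
  If x is outside J, pick an idempotent e = x r \<noteq> 0. As x e = x x r \<in> J, the element
  e x (1 - e) r e = e - e x e r e is a unit of the corner ring e R e, so e x (1 - e) and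
  (1 - e) r e, suitably normalised, are matrix units, forcing e = 0.
\<close>
lemma jacobson_semiprime:
  fixes x :: 'a
  assumes xx: "x * x \<in> jacobson"
  shows "x \<in> jacobson"
proof (rule ccontr)
  assume "x \<notin> jacobson"
  then obtain r where "(x * r) * (x * r) = x * r" "x * r \<noteq> 0"
    by (rule idempotent_in_principal_right_ideal)
  moreover define e where "e = x * r"
  ultimately have ee: "e * e = e" and "e \<noteq> 0"
    by simp_all
  have ee2: "\<And>X. e * (e * X) = e * X"
    using ee by (simp add: mult.assoc[symmetric])
  have xr: "\<And>X. x * (r * X) = e * X"
    unfolding e_def by (simp add: mult.assoc)
  have "x * e = (x * x) * r"
    unfolding e_def by (simp add: mult.assoc)
  then have "x * e \<in> jacobson"
    using jacobson_mult_right[OF xx] by simp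
  define j where "j = e * (x * (e * (r * e)))"
  have "j \<in> jacobson"
    unfolding j_def using jacobson_mult_left[OF jacobson_mult_right[OF \<open>x * e \<in> jacobson\<close>]]
    by (simp add: mult.assoc)
  then obtain w where w: "(1 - 1 * j) * w = 1" "w * (1 - 1 * j) = 1"
    using jacobson_unit[of j 1] by (auto simp: units_of_ring_def)
  have ej: "e * j = j" and je: "j * e = j"
    unfolding j_def by (simp_all add: ee2 mult.assoc ee)
  then have "e * (1 - j) = (1 - j) * e"
    by (simp add: algebra_simps)
  then have ew: "e * w = w * e"
    using inverse_commuting[of "1 - j" w e] w by simp
  define a where "a = e * x - e * x * e"
  define b0 where "b0 = r * e - e * r * e"
  define b where "b = b0 * (e * w * e)"
  have "a * b0 = e - j"
    unfolding a_def b0_def j_def by (simp add: algebra_simps ee ee2 xr)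
  have "(e - j) * w = ((1 - j) * e) * w"
    using ej je by (simp add: algebra_simps)
  also have "\<dots> = (1 - j) * w * e"
    using ew by (simp add: mult.assoc)
  finally have ejw: "(e - j) * w = e"
    using w by simp
  have "(e - j) * e = e - j"
    using je ee by (simp add: algebra_simps)
  have "a * b = (a * b0) * (e * w * e)"
    unfolding b_def by (simp add: mult.assoc)
  also have "\<dots> = (e - j) * e * w * e"
    using \<open>a * b0 = e - j\<close> by (simp add: mult.assoc)
  also have "\<dots> = e"
    using \<open>(e - j) * e = e - j\<close> ejw ee by simp
  finally have ab: "a * b = e" .
  have "e = 0"
  proof (rule matrix_units_trivial[OF UU ee _ _ _ _ ab])
    show "e * a = a"
      unfolding a_def by (simp add: algebra_simps ee2)
    show "a * e = 0"
      unfolding a_def by (simp add: algebra_simps ee)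
    show "b * e = b"
      unfolding b_def by (simp add: mult.assoc ee)
    show "e * b = 0"
      unfolding b_def b0_def by (simp add: algebra_simps ee2)
  qed
  with \<open>e \<noteq> 0\<close> show False
    by contradiction
qed

lemma jacobson_if_power:
  fixes x :: 'a
  shows "x ^ n \<in> jacobson \<Longrightarrow> x \<in> jacobson"
proof (induction n rule: less_induct)
  case (less n)
  show ?case
  proof (cases "n \<le> 1")
    case True
    then consider "n = 0" | "n = 1"
      by linarith
    then show ?thesis
      using less.prems jacobson_mult_left[of 1 x] by cases simp_all
  next
    case False
    define m where "m = (n + 1) div 2"
    have m: "m < n" "n \<le> m + m"
      using False unfolding m_def by auto
    have "x ^ m * x ^ m = x ^ n * x ^ (m + m - n)"
      using m by (simp add: power_add[symmetric])
    then have "x ^ m * x ^ m \<in> jacobson"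
      using jacobson_mult_right[OF less.prems] by simp
    then show ?thesis
      using less.IH[OF m(1)] jacobson_semiprime by blast
  qed
qed

lemma idempotent_off_corner_jacobson:
  fixes e y :: 'a
  assumes "e * e = e"
  shows "e * y * (1 - e) \<in> jacobson"
proof -
  have "e * (e * X) = e * X" for X
    using assms by (simp add: mult.assoc[symmetric])
  then have "(e * y * (1 - e)) * (e * y * (1 - e)) = 0"
    using assms by (simp add: algebra_simps)
  then show ?thesis
    using jacobson_semiprime jacobson_zero by metis
qed

text \<open>
  Since (a - a a) r e = e, the product of e a e and e (1 - a) r e differs from e by a term of J.
  So 1 - e + e a e is right invertible, hence a unit by Dedekind-finiteness, and e a e - e is
  nilpotent.
\<close>
lemma corner_minus_idempotent_jacobson:
  fixes a c r e :: 'a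
  assumes ee: "e * e = e" and cr: "c * r = e" and ac: "a - a * a = c"
  shows "e * a * e - e \<in> jacobson"
proof -
  have ee2: "\<And>X. e * (e * X) = e * X"
    using ee by (simp add: mult.assoc[symmetric])
  define z where "z = 1 - e + e * a * e"
  define w where "w = 1 - e + e * (1 - a) * r * e"
  define k where "k = e * a * (1 - e) * ((1 - a) * r * e)"
  have "k \<in> jacobson"
    unfolding k_def using jacobson_mult_right[OF idempotent_off_corner_jacobson[OF ee]] by blast
  then obtain v where v: "(1 - 1 * k) * v = 1"
    using jacobson_unit[of k 1] by (auto simp: units_of_ring_def)
  have "e * ((a - a * a) * (r * e)) = e"
    using ac cr ee by (simp add: mult.assoc[symmetric])
  moreover have "z * w = 1 - k + (e * ((a - a * a) * (r * e)) - e)"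
    unfolding z_def w_def k_def by (simp add: algebra_simps ee ee2)
  ultimately have "z * (w * v) = 1"
    using v by (simp add: mult.assoc[symmetric])
  moreover have "(w * v) * z = 1"
    using dedekind_finite[OF UU] calculation .
  ultimately have "z \<in> units_of_ring"
    by (auto simp: units_of_ring_def)
  then obtain n where "(z - 1) ^ n = 0"
    by (rule unit_unipotent[OF UU])
  then have "(e * a * e - e) ^ n \<in> jacobson"
    unfolding z_def using jacobson_zero by (simp add: algebra_simps)
  then show ?thesis
    by (rule jacobson_if_power)
qed

lemma diff_square_jacobson:
  fixes a :: 'a
  shows "a - a * a \<in> jacobson"
proof (rule ccontr)
  assume "a - a * a \<notin> jacobson"
  then obtain r where "((a - a * a) * r) * ((a - a * a) * r) = (a - a * a) * r"
    and "(a - a * a) * r \<noteq> 0"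
    by (rule idempotent_in_principal_right_ideal)
  moreover define e where "e = (a - a * a) * r"
  ultimately have ee: "e * e = e" and "e \<noteq> 0"
    by simp_all
  have "e * a * e - e \<in> jacobson"
    using corner_minus_idempotent_jacobson[OF ee] e_def by simp
  moreover have "(1 - a) - (1 - a) * (1 - a) = a - a * a"
    by (simp add: algebra_simps)
  then have "e * (1 - a) * e - e \<in> jacobson"
    using corner_minus_idempotent_jacobson[OF ee, of "a - a * a" r "1 - a"] e_def by simp
  ultimately have "(e * a * e - e) + (e * (1 - a) * e - e) \<in> jacobson"
    by (rule jacobson_add)
  moreover have "(e * a * e - e) + (e * (1 - a) * e - e) = - e"
    using ee by (simp add: algebra_simps)
  ultimately have "e \<in> jacobson"
    using jacobson_uminus_iff by metis
  with ee \<open>e \<noteq> 0\<close> show False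
    using idempotent_jacobson_eq_0 by blast
qed

end

section \<open>Lifting idempotents\<close>

definition bicommutant :: "'a::{ring,monoid_mult} \<Rightarrow> 'a set" where
  "bicommutant a = {x. \<forall>y. y * a = a * y \<longrightarrow> y * x = x * y}"

lemma bicommutant_self: "a \<in> bicommutant a"
  and bicommutant_one: "1 \<in> bicommutant a"
  and bicommutant_zero: "0 \<in> bicommutant a"
  by (auto simp: bicommutant_def)

lemma bicommutant_add: "x \<in> bicommutant a \<Longrightarrow> y \<in> bicommutant a \<Longrightarrow> x + y \<in> bicommutant a"
  and bicommutant_diff: "x \<in> bicommutant a \<Longrightarrow> y \<in> bicommutant a \<Longrightarrow> x - y \<in> bicommutant a"
  by (auto simp: bicommutant_def algebra_simps)

lemma bicommutant_mult:
  assumes "x \<in> bicommutant a" "y \<in> bicommutant a"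
  shows "x * y \<in> bicommutant a"
  unfolding bicommutant_def
proof (intro CollectI allI impI)
  fix z
  assume "z * a = a * z"
  then have "z * x = x * z" "z * y = y * z"
    using assms by (auto simp: bicommutant_def)
  then show "z * (x * y) = x * y * z"
    by (metis mult.assoc)
qed

lemmas bicommutant_intros =
  bicommutant_self bicommutant_one bicommutant_zero bicommutant_add bicommutant_diff bicommutant_mult

lemma bicommutant_commute:
  assumes "x \<in> bicommutant a" "y \<in> bicommutant a"
  shows "x * y = y * x"
proof -
  have "y * a = a * y"
    using assms(2) by (auto simp: bicommutant_def)
  then show ?thesis
    using assms(1) by (auto simp: bicommutant_def)
qed

text \<open>
  Newton's iteration b \<mapsto> 3 b^2 - 2 b^3 squares the nilpotent defect b^2 - b up to a
  commuting factor, so it reaches an idempotent after finitely many steps; the invariant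
  b - a \<in> (a^2 - a) R keeps the limit close to a.
\<close>
lemma idempotent_lift_in_bicommutant:
  fixes a b g :: "'a::{ring,monoid_mult}"
  assumes "b \<in> bicommutant a" "g \<in> bicommutant a" "b - a = (a * a - a) * g"
    and "(b * b - b) ^ m = 0"
  shows "\<exists>e\<in>bicommutant a. e * e = e \<and> (\<exists>h\<in>bicommutant a. e - a = (a * a - a) * h)"
  using assms
proof (induction m arbitrary: b g rule: less_induct)
  case (less m)
  show ?case
  proof (cases "m \<le> 1")
    case True
    have "b * b = b"
    proof (cases m)
      case 0
      then have "(1::'a) = 0"
        using less.prems(4) by simp
      then show ?thesis
        by (metis eq_zero_if_one_eq_zero)
    qed (use True less.prems(4) in simp)
    then show ?thesis
      using less.prems by blast
  next
    case False
    define n where "n = a * a - a"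
    define d where "d = b * b - b"
    define b' where "b' = b * b + b * b + b * b - b * b * b - b * b * b"
    define s where "s = d + d + d + d - 1 - 1 - 1"
    define t where "t = 1 - b - b"
    have n_bic: "n \<in> bicommutant a"
      unfolding n_def by (intro bicommutant_intros)
    have d_bic: "d \<in> bicommutant a" and b'_bic: "b' \<in> bicommutant a"
      and s_bic: "s \<in> bicommutant a" and t_bic: "t \<in> bicommutant a"
      unfolding d_def b'_def s_def t_def using less.prems by (auto intro!: bicommutant_intros)
    have defect: "b' * b' - b' = d * d * s" and step: "b' - b = d * t"
      unfolding d_def b'_def s_def t_def by (simp_all add: algebra_simps)
    define m' where "m' = (m + 1) div 2"
    have m': "m' < m" "m \<le> m' + m'"
      using False unfolding m'_def by auto
    have "(d * d * s) ^ m' = (d * d) ^ m' * s ^ m'"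
      using bicommutant_commute[OF bicommutant_mult[OF d_bic d_bic] s_bic]
      by (rule power_mult_distrib_commuting)
    also have "(d * d) ^ m' = d ^ m * d ^ (m' + m' - m)"
      using m' by (simp add: power_mult_distrib_commuting power_add[symmetric])
    also have "d ^ m = 0"
      using less.prems(4) d_def by simp
    finally have defect_nil: "(b' * b' - b') ^ m' = 0"
      using defect by simp
    have bg: "b - a = n * g"
      using less.prems(3) unfolding n_def .
    define h where "h = 1 + a * g + g * a + g * (n * g) - g"
    have an: "a * (n * g) = n * (a * g)"
      using bicommutant_commute[OF bicommutant_self n_bic] by (simp add: mult.assoc[symmetric])
    have b: "b = a + n * g"
      using bg by (simp add: algebra_simps)
    have "d = (a * a - a) + (a * (n * g) + (n * g) * a + (n * g) * (n * g) - n * g)"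
      unfolding d_def b by (simp add: algebra_simps)
    also have "\<dots> = n + n * (a * g) + n * (g * a) + n * (g * (n * g)) - n * g"
      unfolding n_def[symmetric] an by (simp add: mult.assoc)
    also have "\<dots> = n * h"
      unfolding h_def by (simp add: algebra_simps)
    finally have dh: "d = n * h" .
    have "b' - a = (b' - b) + (b - a)"
      by simp
    also have "\<dots> = n * (h * t + g)"
      unfolding step bg dh by (simp add: algebra_simps)
    finally have "b' - a = n * (h * t + g)" .
    moreover have "h * t + g \<in> bicommutant a"
      unfolding h_def using less.prems n_bic t_bic by (intro bicommutant_intros)
    ultimately show ?thesis
      using less.IH[OF m'(1) b'_bic _ _ defect_nil] unfolding n_def by blast
  qed
qed

lemma strongly_nil_clean_if_nilpotent_diff_square:
  fixes a :: "'a::{ring,monoid_mult}"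
  assumes "(a - a * a) ^ N = 0"
  shows "strongly_nil_clean_elem a"
proof -
  have N: "(a * a - a) ^ N = 0"
    using nilpotent_uminus[OF assms] by simp
  then obtain e h where e: "e \<in> bicommutant a" "e * e = e" and h: "h \<in> bicommutant a"
    and eh: "e - a = (a * a - a) * h"
    using idempotent_lift_in_bicommutant[of a a 0 N] by (auto intro: bicommutant_intros)
  have "a * a - a \<in> bicommutant a"
    by (intro bicommutant_intros)
  then have "((a * a - a) * h) ^ N = (a * a - a) ^ N * h ^ N"
    using bicommutant_commute[OF _ h] power_mult_distrib_commuting by blast
  then have "(a - e) ^ N = 0"
    using N nilpotent_uminus eh by (metis minus_diff_eq mult_zero_left)
  moreover have "e * (a - e) = (a - e) * e"
    using bicommutant_commute[OF e(1) bicommutant_self] by (simp add: algebra_simps)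
  ultimately show ?thesis
    unfolding strongly_nil_clean_elem_def idempotents_def nilpotents_def
    using e(2) by (intro exI[of _ e] exI[of _ "a - e"]) auto
qed

theorem mainTheorem5:
  shows "strongly_nil_clean_ring TYPE('a::{ring,monoid_mult}) \<longleftrightarrow>
         CSNC_ring TYPE('a) \<and> semi_potent TYPE('a)"
proof
  assume snc: "strongly_nil_clean_ring TYPE('a)"
  then have "CSNC_ring TYPE('a)"
    by (simp add: CSNC_ring_def strongly_nil_clean_ring_def)
  moreover have "semi_potent TYPE('a)"
    using snc by (rule strongly_nil_clean_imp_semi_potent)
  ultimately show "CSNC_ring TYPE('a) \<and> semi_potent TYPE('a)" ..
next
  assume "CSNC_ring TYPE('a) \<and> semi_potent TYPE('a)"
  then have UU: "UU_ring TYPE('a)" and sp: "semi_potent TYPE('a)"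
    using CSNC_imp_UU_ring by blast+
  show "strongly_nil_clean_ring TYPE('a)"
    unfolding strongly_nil_clean_ring_def
  proof
    fix a :: 'a
    obtain N where "(a - a * a) ^ N = 0"
      using jacobson_nil[OF UU diff_square_jacobson[OF UU sp]] .
    then show "strongly_nil_clean_elem a"
      by (rule strongly_nil_clean_if_nilpotent_diff_square)
  qed
qed

end
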